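(* If distribution $\mathcal D$ stochastically dominates distribution $\mathcal D'$ (both with finite support), then ${\sf MBRev}(\mathcal D)\ge{\sf MBRev}(\mathcal D')$.
   Context: $\mathcal D$ stochastically dominates $\mathcal D'$ if $\Pr_{u\sim\mathcal D}[u\ge t]\ge\Pr_{u\sim\mathcal D'}[u\ge t]$ for all $t$. For a finitely supported distribution with support $v_1<\dots<v_m$ and $\Pr[v_i]=q_i>0$, ${\sf MBRev}$ is the optimal value of the LP: maximize $\sum_i q_i(v_ix_i-u_i)$ subject to $u_i\ge(v_i-v_j)x_j$ for all $i>j$, $u_i\ge0$, $0\le x_i\le1$. Equivalently ${\sf MBRev}=\max_{x}\mathbb E_{v_i}[v_ix_i-\max_{j<i}(v_i-v_j)x_j]$ (max over $j<i$ of an empty set taken as $0$, and terms negative replaced by $0$ through $u_i\ge0$). *)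

theory Defs
  imports "HOL-Probability.Probability"
begin

definition stoch_dom :: "real pmf \<Rightarrow> real pmf \<Rightarrow> bool" where
  "stoch_dom D D' \<longleftrightarrow>
     (\<forall>t::real. measure_pmf.prob D {u. u \<ge> t} \<ge> measure_pmf.prob D' {u. u \<ge> t})"

definition mb_feasible :: "real pmf \<Rightarrow> (real \<Rightarrow> real) \<Rightarrow> (real \<Rightarrow> real) \<Rightarrow> bool" where
  "mb_feasible D x u \<longleftrightarrow>
     (\<forall>v\<in>set_pmf D. 0 \<le> x v \<and> x v \<le> 1 \<and> 0 \<le> u v \<and>
        (\<forall>w\<in>set_pmf D. w < v \<longrightarrow> u v \<ge> (v - w) * x w))"

definition mb_objective :: "real pmf \<Rightarrow> (real \<Rightarrow> real) \<Rightarrow> (real \<Rightarrow> real) \<Rightarrow> real" where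
  "mb_objective D x u = (\<Sum>v\<in>set_pmf D. pmf D v * (v * x v - u v))"

text \<open>MBRev: the optimal value of the LP (the LP is feasible, e.g. x = u = 0, and its
  value is bounded, so the supremum is the maximum).\<close>
definition MBRev :: "real pmf \<Rightarrow> real" where
  "MBRev D = Sup {mb_objective D x u | x u. mb_feasible D x u}"

end

theory Submission
  imports Defs
begin

text \<open>Given a feasible point (x', u') for D', replace x' by its monotone upper envelope y over
  the positive support points of D', and u' by the least utility U' v = max (0, max over support
  points z < v of (v - z) y z) compatible with y. Each term v x' v - u' v of the objective only
  grows, and g v = v y v - U' v is monotone in v, so stochastic dominance gives
  E_D' g \<le> E_D g (Abel summation against the nonnegative tail differences). Finally y together
  with the least utility computed over the support of D is feasible for D, and that utility is
  pointwise below U', because every nonzero value of y is attained at a support point of D'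
  lying further to the left.\<close>

lemma sum_mult_ge_of_tails_nonneg:
  fixes h g :: "'a::linorder \<Rightarrow> real"
  assumes "finite T"
    and "\<And>a. 0 \<le> (\<Sum>v\<in>{v\<in>T. a \<le> v}. h v)"
    and "mono_on T g"
    and "\<And>v. v \<in> T \<Longrightarrow> m \<le> g v"
  shows "m * sum h T \<le> (\<Sum>v\<in>T. h v * g v)"
  using assms
proof (induction T arbitrary: m rule: finite_linorder_min_induct)
  case empty
  then show ?case by simp
next
  case (insert b A)
  have tails_A: "0 \<le> (\<Sum>v\<in>{v\<in>A. a \<le> v}. h v)" for a
  proof (cases "b < a \<or> A = {}")
    case True
    then have "{v\<in>A. a \<le> v} = {v\<in>insert b A. a \<le> v} \<or> A = {}" by auto
    then show ?thesis using insert.prems(1)[of a] by auto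
  next
    case False
    then have "{v\<in>A. a \<le> v} = A"
      using insert.hyps(2) by force
    moreover have "{v\<in>insert b A. Min A \<le> v} = A"
      using insert.hyps(1,2) False by (auto, meson Min_in less_le_not_le)
    ultimately show ?thesis using insert.prems(1)[of "Min A"] by simp
  qed
  have "mono_on A g"
    using insert.prems(2) by (auto intro: mono_on_subset)
  moreover have "g b \<le> g v" if "v \<in> A" for v
    using insert.prems(2) insert.hyps(2) that by (auto simp: mono_on_def less_imp_le)
  ultimately have IH: "g b * sum h A \<le> (\<Sum>v\<in>A. h v * g v)"
    using insert.IH tails_A by blast
  have "{v\<in>insert b A. b \<le> v} = insert b A"
    using insert.hyps(2) by force
  then have total: "0 \<le> sum h (insert b A)"
    using insert.prems(1)[of b] by simp
  have b_notin: "b \<notin> A"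
    using insert.hyps(2) by auto
  have "m * sum h (insert b A) \<le> g b * sum h (insert b A)"
    using insert.prems(3) total by (simp add: mult_right_mono)
  also have "\<dots> = h b * g b + g b * sum h A"
    using insert.hyps(1) b_notin by (simp add: distrib_left)
  also have "\<dots> \<le> (\<Sum>v\<in>insert b A. h v * g v)"
    using IH insert.hyps(1) b_notin by simp
  finally show ?case .
qed

lemma measure_pmf_eq_sum_superset:
  fixes D :: "'a pmf"
  assumes "finite T" "set_pmf D \<subseteq> T"
  shows "measure_pmf.prob D B = (\<Sum>v\<in>{v\<in>T. v \<in> B}. pmf D v)"
proof -
  have "measure_pmf.prob D B = measure_pmf.prob D (B \<inter> set_pmf D)"
    by (simp add: measure_Int_set_pmf)
  also have "\<dots> = sum (pmf D) (B \<inter> set_pmf D)"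
    using assms by (intro measure_measure_pmf_finite) (auto intro: finite_subset)
  also have "\<dots> = (\<Sum>v\<in>{v\<in>T. v \<in> B}. pmf D v)"
    using assms by (intro sum.mono_neutral_left) (auto simp: set_pmf_eq)
  finally show ?thesis .
qed

lemma stoch_dom_sum_mono:
  fixes g :: "real \<Rightarrow> real"
  assumes "finite (set_pmf D)" "finite (set_pmf D')" "stoch_dom D D'" "mono g"
  shows "(\<Sum>v\<in>set_pmf D'. pmf D' v * g v) \<le> (\<Sum>v\<in>set_pmf D. pmf D v * g v)"
proof -
  define T where "T = set_pmf D \<union> set_pmf D'"
  define h where "h v = pmf D v - pmf D' v" for v
  have T: "finite T" "set_pmf D \<subseteq> T" "set_pmf D' \<subseteq> T"
    using assms(1,2) by (auto simp: T_def)
  have tails: "0 \<le> (\<Sum>v\<in>{v\<in>T. a \<le> v}. h v)" for a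
    using assms(3)[unfolded stoch_dom_def, rule_format, of a]
      measure_pmf_eq_sum_superset[OF T(1,2), of "{u. a \<le> u}"]
      measure_pmf_eq_sum_superset[OF T(1,3), of "{u. a \<le> u}"]
    by (simp add: h_def sum_subtractf)
  have "Min (insert 0 (g ` T)) * sum h T \<le> (\<Sum>v\<in>T. h v * g v)"
    using T(1) tails mono_imp_mono_on[OF assms(4)]
    by (intro sum_mult_ge_of_tails_nonneg) auto
  moreover have "sum h T = 0"
    using T by (simp add: h_def sum_subtractf sum_pmf_eq_1)
  ultimately have "0 \<le> (\<Sum>v\<in>T. h v * g v)"
    by simp
  then have "(\<Sum>v\<in>T. pmf D' v * g v) \<le> (\<Sum>v\<in>T. pmf D v * g v)"
    by (simp add: h_def left_diff_distrib sum_subtractf)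
  moreover have "(\<Sum>v\<in>T. pmf D v * g v) = (\<Sum>v\<in>set_pmf D. pmf D v * g v)"
    "(\<Sum>v\<in>T. pmf D' v * g v) = (\<Sum>v\<in>set_pmf D'. pmf D' v * g v)"
    using T by (auto intro: sum.mono_neutral_right simp: set_pmf_eq)
  ultimately show ?thesis by simp
qed

definition upper_envelope :: "real set \<Rightarrow> (real \<Rightarrow> real) \<Rightarrow> real \<Rightarrow> real" where
  "upper_envelope S x w = Max (insert 0 (x ` {z\<in>S. 0 < z \<and> z \<le> w}))"

definition least_utility :: "real set \<Rightarrow> (real \<Rightarrow> real) \<Rightarrow> real \<Rightarrow> real" where
  "least_utility S y v = Max (insert 0 ((\<lambda>z. (v - z) * y z) ` {z\<in>S. z < v}))"

context
  fixes S :: "real set"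
  assumes finite_S: "finite S"
begin

lemma upper_envelope_nonneg: "0 \<le> upper_envelope S x w"
  unfolding upper_envelope_def using finite_S by simp

lemma upper_envelope_le_1: "(\<And>z. z \<in> S \<Longrightarrow> x z \<le> 1) \<Longrightarrow> upper_envelope S x w \<le> 1"
  unfolding upper_envelope_def using finite_S by auto

lemma upper_envelope_mono: "w1 \<le> w2 \<Longrightarrow> upper_envelope S x w1 \<le> upper_envelope S x w2"
  unfolding upper_envelope_def using finite_S by (intro Max_mono) auto

lemma upper_envelope_nonpos: "w \<le> 0 \<Longrightarrow> upper_envelope S x w = 0"
  unfolding upper_envelope_def by (simp cong: conj_cong)

lemma upper_envelope_ge: "z \<in> S \<Longrightarrow> 0 < z \<Longrightarrow> z \<le> w \<Longrightarrow> x z \<le> upper_envelope S x w"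
  unfolding upper_envelope_def using finite_S by (intro Max_ge) auto

lemma upper_envelope_cases:
  "upper_envelope S x w = 0 \<or> (\<exists>z\<in>S. 0 < z \<and> z \<le> w \<and> upper_envelope S x w = x z)"
proof -
  have "upper_envelope S x w \<in> insert 0 (x ` {z\<in>S. 0 < z \<and> z \<le> w})"
    unfolding upper_envelope_def using finite_S by (intro Max_in) auto
  then show ?thesis by auto
qed

lemma upper_envelope_attained:
  "upper_envelope S x w = 0 \<or>
    (\<exists>z\<in>S. z \<le> w \<and> upper_envelope S x z = upper_envelope S x w)"
  using upper_envelope_cases[of x w] upper_envelope_ge upper_envelope_mono
  by (metis order.antisym order_refl)

lemma least_utility_nonneg: "0 \<le> least_utility S y v"
  unfolding least_utility_def using finite_S by simp

lemma least_utility_ge: "z \<in> S \<Longrightarrow> z < v \<Longrightarrow> (v - z) * y z \<le> least_utility S y v"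
  unfolding least_utility_def using finite_S by (intro Max_ge) auto

lemma least_utility_le:
  "0 \<le> c \<Longrightarrow> (\<And>z. z \<in> S \<Longrightarrow> z < v \<Longrightarrow> (v - z) * y z \<le> c) \<Longrightarrow> least_utility S y v \<le> c"
  unfolding least_utility_def using finite_S by auto

lemma least_utility_increment:
  assumes "mono y" "\<And>w. 0 \<le> y w" "v1 \<le> v2"
  shows "least_utility S y v2 \<le> least_utility S y v1 + (v2 - v1) * y v2"
proof (rule least_utility_le)
  show "0 \<le> least_utility S y v1 + (v2 - v1) * y v2"
    using least_utility_nonneg assms by simp
  fix z assume z: "z \<in> S" "z < v2"
  have y_z: "y z \<le> y v2"
    using assms(1) z(2) by (simp add: monoD)
  show "(v2 - z) * y z \<le> least_utility S y v1 + (v2 - v1) * y v2"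
  proof (cases "z < v1")
    case True
    have "(v2 - z) * y z = (v1 - z) * y z + (v2 - v1) * y z"
      by (simp add: algebra_simps)
    also have "\<dots> \<le> least_utility S y v1 + (v2 - v1) * y v2"
      using least_utility_ge[OF z(1) True] y_z assms(3)
      by (intro add_mono mult_left_mono) auto
    finally show ?thesis .
  next
    case False
    then have "(v2 - z) * y z \<le> (v2 - v1) * y v2"
      using y_z assms(2) z by (intro mult_mono) auto
    then show ?thesis using least_utility_nonneg by (simp add: add_increasing)
  qed
qed

lemma least_utility_nonpos:
  assumes "\<And>w. w \<le> 0 \<Longrightarrow> y w = 0" "v \<le> 0"
  shows "least_utility S y v = 0"
  using assms by (intro antisym least_utility_le least_utility_nonneg) auto

text \<open>The envelope is taken over positive support points only because monotonicity fails
  when y jumps at a negative value.\<close>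

lemma mono_revenue_integrand:
  assumes "mono y" "\<And>w. 0 \<le> y w" "\<And>w. w \<le> 0 \<Longrightarrow> y w = 0"
  shows "mono (\<lambda>v. v * y v - least_utility S y v)"
proof -
  let ?g = "\<lambda>v. v * y v - least_utility S y v"
  have nonneg_le: "?g v1 \<le> ?g v2" if "0 \<le> v1" "v1 \<le> v2" for v1 v2
  proof -
    have "v1 * y v1 \<le> v1 * y v2"
      using that assms(1) by (simp add: mult_left_mono monoD)
    then show ?thesis
      using least_utility_increment[OF assms(1,2) \<open>v1 \<le> v2\<close>] by (simp add: algebra_simps)
  qed
  have nonpos: "?g v = ?g 0" if "v \<le> 0" for v
    using that assms(3) least_utility_nonpos[OF assms(3)] by simp
  show ?thesis
  proof (rule monoI)
    fix v1 v2 :: real assume "v1 \<le> v2"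
    show "?g v1 \<le> ?g v2"
    proof (cases "0 \<le> v1")
      case True
      then show ?thesis using nonneg_le \<open>v1 \<le> v2\<close> by blast
    next
      case False
      then have "?g v1 = ?g 0" using nonpos by simp
      also have "\<dots> \<le> ?g v2"
        using nonneg_le[of 0 v2] nonpos[of v2] by (cases "0 \<le> v2") auto
      finally show ?thesis .
    qed
  qed
qed

end

lemma least_utility_le_of_attained:
  assumes "finite S" "finite S'" "\<And>w. 0 \<le> y w"
    and "\<And>w. w \<in> S \<Longrightarrow> y w = 0 \<or> (\<exists>z\<in>S'. z \<le> w \<and> y z = y w)"
  shows "least_utility S y v \<le> least_utility S' y v"
proof (rule least_utility_le[OF assms(1) least_utility_nonneg[OF assms(2)]])
  fix w assume w: "w \<in> S" "w < v"
  from assms(4)[OF w(1)] show "(v - w) * y w \<le> least_utility S' y v"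
  proof
    assume "y w = 0"
    then show ?thesis using least_utility_nonneg[OF assms(2)] by simp
  next
    assume "\<exists>z\<in>S'. z \<le> w \<and> y z = y w"
    then obtain z where z: "z \<in> S'" "z \<le> w" "y z = y w" by blast
    have "(v - w) * y w \<le> (v - z) * y w"
      using z assms(3)[of w] by (intro mult_right_mono) auto
    also have "\<dots> = (v - z) * y z"
      using z(3) by simp
    also have "\<dots> \<le> least_utility S' y v"
      using least_utility_ge[OF assms(2) z(1)] z(2) w(2) by simp
    finally show ?thesis .
  qed
qed

lemma mb_feasible_least_utility:
  assumes "finite (set_pmf D)" "\<And>v. 0 \<le> y v" "\<And>v. y v \<le> 1"
  shows "mb_feasible D y (least_utility (set_pmf D) y)"
  unfolding mb_feasible_def
  using assms least_utility_nonneg[OF assms(1)] least_utility_ge[OF assms(1)] by auto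

lemma mb_objective_term_le_envelope:
  assumes "finite (set_pmf D)" "mb_feasible D x u" "w \<in> set_pmf D"
  defines "y \<equiv> upper_envelope (set_pmf D) x"
  shows "w * x w - u w \<le> w * y w - least_utility (set_pmf D) y w"
proof -
  let ?S = "set_pmf D"
  have x_nonneg: "\<And>z. z \<in> ?S \<Longrightarrow> 0 \<le> x z" and u_nonneg: "0 \<le> u w"
    and ic: "\<And>z. z \<in> ?S \<Longrightarrow> z < w \<Longrightarrow> (w - z) * x z \<le> u w"
    using assms(2,3) unfolding mb_feasible_def by auto
  have "least_utility ?S y w \<le> u w"
  proof (rule least_utility_le[OF assms(1) u_nonneg])
    fix z assume z: "z \<in> ?S" "z < w"
    from upper_envelope_cases[OF assms(1), of x z]
    show "(w - z) * y z \<le> u w"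
    proof
      assume "upper_envelope ?S x z = 0"
      then show ?thesis using u_nonneg by (simp add: y_def)
    next
      assume "\<exists>z'\<in>?S. 0 < z' \<and> z' \<le> z \<and> upper_envelope ?S x z = x z'"
      then obtain z' where z': "z' \<in> ?S" "z' \<le> z" "y z = x z'"
        unfolding y_def by blast
      have "(w - z) * x z' \<le> (w - z') * x z'"
        using z' x_nonneg by (intro mult_right_mono) auto
      also have "\<dots> \<le> u w"
        using ic z' z by simp
      finally show ?thesis using z' by simp
    qed
  qed
  moreover have "w * x w \<le> w * y w"
  proof (cases "0 < w")
    case True
    then show ?thesis
      using upper_envelope_ge[OF assms(1,3) True] by (simp add: y_def mult_left_mono)
  next
    case False
    then show ?thesis
      using upper_envelope_nonpos[OF assms(1)] x_nonneg[OF assms(3)]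
      by (simp add: y_def mult_nonpos_nonneg)
  qed
  ultimately show ?thesis by simp
qed

lemma mb_objective_le_sum_abs:
  assumes "mb_feasible D x u"
  shows "mb_objective D x u \<le> (\<Sum>v\<in>set_pmf D. pmf D v * \<bar>v\<bar>)"
  unfolding mb_objective_def
proof (rule sum_mono)
  fix v assume "v \<in> set_pmf D"
  then have "0 \<le> x v" "x v \<le> 1" "0 \<le> u v"
    using assms unfolding mb_feasible_def by auto
  then have "v * x v \<le> \<bar>v\<bar> * x v"
    by (intro mult_right_mono) auto
  also have "\<dots> \<le> \<bar>v\<bar>"
    using \<open>x v \<le> 1\<close> by (intro mult_left_le) auto
  finally have "v * x v \<le> \<bar>v\<bar>" .
  then have "v * x v - u v \<le> \<bar>v\<bar>"
    using \<open>0 \<le> u v\<close> by simp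
  then show "pmf D v * (v * x v - u v) \<le> pmf D v * \<bar>v\<bar>"
    by (simp add: mult_left_mono)
qed

lemma mb_objective_le_MBRev:
  "mb_feasible D x u \<Longrightarrow> mb_objective D x u \<le> MBRev D"
  unfolding MBRev_def using mb_objective_le_sum_abs
  by (intro cSup_upper bdd_aboveI) auto

lemma MBRev_le:
  assumes "\<And>x u. mb_feasible D x u \<Longrightarrow> mb_objective D x u \<le> c"
  shows "MBRev D \<le> c"
proof -
  have "mb_feasible D (\<lambda>_. 0) (\<lambda>_. 0)"
    unfolding mb_feasible_def by simp
  then show ?thesis
    unfolding MBRev_def using assms by (intro cSup_least) auto
qed

lemma mb_objective_le_MBRev_of_stoch_dom:
  assumes fin: "finite (set_pmf D)" "finite (set_pmf D')"
    and dom: "stoch_dom D D'" and feas: "mb_feasible D' x u"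
  shows "mb_objective D' x u \<le> MBRev D"
proof -
  define y where "y = upper_envelope (set_pmf D') x"
  define g where "g v = v * y v - least_utility (set_pmf D') y v" for v
  have y_nonneg: "0 \<le> y v" for v
    using upper_envelope_nonneg[OF fin(2)] by (simp add: y_def)
  have y_le_1: "y v \<le> 1" for v
    using feas upper_envelope_le_1[OF fin(2)] by (simp add: y_def mb_feasible_def)
  have "mono g"
    unfolding g_def y_def using fin(2)
    by (intro mono_revenue_integrand monoI upper_envelope_mono upper_envelope_nonneg
        upper_envelope_nonpos)
  have "mb_objective D' x u \<le> (\<Sum>v\<in>set_pmf D'. pmf D' v * g v)"
    unfolding mb_objective_def g_def y_def
    using mb_objective_term_le_envelope[OF fin(2) feas]
    by (intro sum_mono mult_left_mono) auto
  also have "\<dots> \<le> (\<Sum>v\<in>set_pmf D. pmf D v * g v)"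
    using stoch_dom_sum_mono[OF fin dom \<open>mono g\<close>] .
  also have "\<dots> \<le> mb_objective D y (least_utility (set_pmf D) y)"
    unfolding mb_objective_def g_def
    using least_utility_le_of_attained[OF fin y_nonneg]
      upper_envelope_attained[OF fin(2), of x] unfolding y_def
    by (intro sum_mono mult_left_mono) auto
  also have "\<dots> \<le> MBRev D"
    using mb_feasible_least_utility[OF fin(1) y_nonneg y_le_1] by (rule mb_objective_le_MBRev)
  finally show ?thesis .
qed

theorem lemmaC4:
  fixes D D' :: "real pmf"
  assumes "finite (set_pmf D)" and "finite (set_pmf D')"
    and "stoch_dom D D'"
  shows "MBRev D \<ge> MBRev D'"
  using mb_objective_le_MBRev_of_stoch_dom[OF assms] by (rule MBRev_le)

end
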